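(* Let $R$ be a DT ring. Then $6\in J(R)$.
   Context: All rings are associative with identity; $J(R)$ is the Jacobson radical, $U(R)$ the group of units. $\Delta(R)=\{x\in R: x+u\in U(R)\text{ for all }u\in U(R)\}$. $\mathrm{Tr}(R)=\{x\in R: x^3=x\}$. A ring $R$ is a DT ring if every $r\in R$ can be written $r=e+d$ with $e\in\mathrm{Tr}(R)$ and $d\in\Delta(R)$. *)

theory Defs
  imports Main
begin

definition units_of_ring :: "'a::ring_1 set" where
  "units_of_ring = {u. \<exists>v. u * v = 1 \<and> v * u = 1}"

definition left_ideal :: "'a::ring_1 set \<Rightarrow> bool" where
  "left_ideal I \<longleftrightarrow> 0 \<in> I \<and> (\<forall>x\<in>I. \<forall>y\<in>I. x + y \<in> I) \<and> (\<forall>x\<in>I. - x \<in> I)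
     \<and> (\<forall>r x. x \<in> I \<longrightarrow> r * x \<in> I)"

definition maximal_left_ideal :: "'a::ring_1 set \<Rightarrow> bool" where
  "maximal_left_ideal M \<longleftrightarrow> left_ideal M \<and> M \<noteq> UNIV \<and>
     (\<forall>I. left_ideal I \<and> M \<subseteq> I \<and> I \<noteq> UNIV \<longrightarrow> I = M)"

definition jacobson :: "'a::ring_1 set" where
  "jacobson = \<Inter> {M. maximal_left_ideal M}"

definition Delta :: "'a::ring_1 set" where
  "Delta = {x. \<forall>u\<in>units_of_ring. x + u \<in> units_of_ring}"

definition tripotents :: "'a::ring_1 set" where
  "tripotents = {x. x ^ 3 = x}"

definition DT_ring :: "'a::ring_1 itself \<Rightarrow> bool" where
  "DT_ring _ \<longleftrightarrow> (\<forall>r::'a. \<exists>e d. r = e + d \<and> e \<in> tripotents \<and> d \<in> Delta)"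

end

theory Submission
  imports Defs
begin

text \<open>
  \<open>\<Delta>(R)\<close> is closed under addition and multiplication and under multiplication by units.
  For a tripotent \<open>e\<close>, the elements \<open>1 - e\<^sup>2 \<plusminus> e\<close> are involutions, so \<open>s = 2e\<close> is a
  difference of units and \<open>s\<Delta> \<union> \<Delta>s \<subseteq> \<Delta>\<close>. Writing \<open>s = t + d\<close> with \<open>t\<close> tripotent and
  \<open>d \<in> \<Delta>\<close> and expanding \<open>(s - d)\<^sup>3 = s - d\<close> shows \<open>6e = s\<^sup>3 - s \<in> \<Delta>\<close>. Decomposing an
  arbitrary \<open>r\<close> in the same way gives \<open>6r \<in> \<Delta>\<close>, hence \<open>1 - 6r\<close> is a unit for every \<open>r\<close>,
  and the central element \<open>6\<close> lies in every maximal left ideal.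
\<close>

lemma units_of_ring_one: "(1::'a::ring_1) \<in> units_of_ring"
  unfolding units_of_ring_def by auto

lemma units_of_ring_mult:
  assumes "u \<in> units_of_ring" "v \<in> units_of_ring"
  shows "(u * v :: 'a::ring_1) \<in> units_of_ring"
proof -
  obtain u' v' where "u * u' = 1" "u' * u = 1" "v * v' = 1" "v' * v = 1"
    using assms unfolding units_of_ring_def by blast
  then have "(u * v) * (v' * u') = 1" "(v' * u') * (u * v) = 1"
    by (metis mult.assoc mult_1_left)+
  then show ?thesis unfolding units_of_ring_def by blast
qed

lemma units_of_ring_uminus:
  assumes "u \<in> units_of_ring"
  shows "(- u :: 'a::ring_1) \<in> units_of_ring"
proof -
  obtain v where "u * v = 1" "v * u = 1"
    using assms unfolding units_of_ring_def by blast
  then have "(- u) * (- v) = 1" "(- v) * (- u) = 1" by simp_all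
  then show ?thesis unfolding units_of_ring_def by blast
qed

lemma involution_in_units_of_ring: "(u::'a::ring_1) * u = 1 \<Longrightarrow> u \<in> units_of_ring"
  unfolding units_of_ring_def by blast

lemma Delta_add_units: "x \<in> Delta \<Longrightarrow> u \<in> units_of_ring \<Longrightarrow> (x + u :: 'a::ring_1) \<in> units_of_ring"
  unfolding Delta_def by blast

lemma Delta_zero: "(0::'a::ring_1) \<in> Delta"
  unfolding Delta_def by simp

lemma Delta_add: "x \<in> Delta \<Longrightarrow> y \<in> Delta \<Longrightarrow> (x + y :: 'a::ring_1) \<in> Delta"
  unfolding Delta_def by (simp add: add.assoc)

lemma Delta_uminus:
  assumes "x \<in> Delta"
  shows "(- x :: 'a::ring_1) \<in> Delta"
  unfolding Delta_def
proof safe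
  fix u :: 'a
  assume "u \<in> units_of_ring"
  then have "- (x + - u) \<in> units_of_ring"
    using assms Delta_add_units units_of_ring_uminus by blast
  then show "- x + u \<in> units_of_ring" by simp
qed

lemma Delta_diff: "x \<in> Delta \<Longrightarrow> y \<in> Delta \<Longrightarrow> (x - y :: 'a::ring_1) \<in> Delta"
  using Delta_add Delta_uminus by (metis diff_conv_add_uminus)

lemma Delta_of_nat_mult: "x \<in> Delta \<Longrightarrow> (of_nat n * x :: 'a::ring_1) \<in> Delta"
  by (induction n) (simp_all add: Delta_zero Delta_add distrib_right)

lemma units_mult_Delta:
  assumes "u \<in> units_of_ring" "x \<in> Delta"
  shows "(u * x :: 'a::ring_1) \<in> Delta"
  unfolding Delta_def
proof safe
  obtain u' where "u' \<in> units_of_ring" "u * u' = 1"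
    using assms(1) unfolding units_of_ring_def by blast
  fix w :: 'a
  assume "w \<in> units_of_ring"
  then have "u * (x + u' * w) \<in> units_of_ring"
    using assms \<open>u' \<in> units_of_ring\<close> Delta_add_units units_of_ring_mult by blast
  then show "u * x + w \<in> units_of_ring"
    by (simp add: distrib_left \<open>u * u' = 1\<close> mult.assoc[symmetric])
qed

lemma Delta_mult_units:
  assumes "x \<in> Delta" "u \<in> units_of_ring"
  shows "(x * u :: 'a::ring_1) \<in> Delta"
  unfolding Delta_def
proof safe
  obtain u' where "u' \<in> units_of_ring" "u' * u = 1"
    using assms(2) unfolding units_of_ring_def by blast
  fix w :: 'a
  assume "w \<in> units_of_ring"
  then have "(x + w * u') * u \<in> units_of_ring"
    using assms \<open>u' \<in> units_of_ring\<close> Delta_add_units units_of_ring_mult by blast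
  then show "x * u + w \<in> units_of_ring"
    by (simp add: distrib_right \<open>u' * u = 1\<close> mult.assoc)
qed

lemma one_plus_Delta_mult_in_units:
  assumes "x \<in> Delta" "y \<in> Delta"
  shows "(1 + x * y :: 'a::ring_1) \<in> units_of_ring"
proof -
  have "(x + 1) * (y + 1) \<in> units_of_ring"
    using assms Delta_add_units units_of_ring_mult units_of_ring_one by blast
  then have "- (x + y) + (x + 1) * (y + 1) \<in> units_of_ring"
    using assms Delta_add Delta_uminus Delta_add_units by blast
  then show ?thesis by (simp add: algebra_simps)
qed

lemma Delta_mult:
  assumes "x \<in> Delta" "y \<in> Delta"
  shows "(x * y :: 'a::ring_1) \<in> Delta"
  unfolding Delta_def
proof safe
  fix u :: 'a
  assume "u \<in> units_of_ring"
  then obtain u' where "u' \<in> units_of_ring" "u' * u = 1"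
    unfolding units_of_ring_def by blast
  have "(1 + x * (y * u')) * u \<in> units_of_ring"
    using assms \<open>u \<in> units_of_ring\<close> \<open>u' \<in> units_of_ring\<close>
    by (intro units_of_ring_mult one_plus_Delta_mult_in_units Delta_mult_units)
  then show "x * y + u \<in> units_of_ring"
    by (simp add: algebra_simps \<open>u' * u = 1\<close> mult.assoc)
qed

lemma tripotent_involution:
  assumes "e ^ 3 = e"
  shows "(1 - e\<^sup>2 + e) * (1 - e\<^sup>2 + e) = (1::'a::ring_1)"
proof -
  have "e * (e * e) = e" "e * (e * (e * x)) = e * x" for x
    using assms by (simp_all add: power3_eq_cube mult.assoc[symmetric])
  then show ?thesis by (simp add: power2_eq_square algebra_simps)
qed

lemma units_diff_mult_Delta:
  "u \<in> units_of_ring \<Longrightarrow> v \<in> units_of_ring \<Longrightarrow> x \<in> Delta \<Longrightarrow> ((u - v) * x :: 'a::ring_1) \<in> Delta"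
  by (simp add: left_diff_distrib Delta_diff units_mult_Delta)

lemma Delta_mult_units_diff:
  "x \<in> Delta \<Longrightarrow> u \<in> units_of_ring \<Longrightarrow> v \<in> units_of_ring \<Longrightarrow> (x * (u - v) :: 'a::ring_1) \<in> Delta"
  by (simp add: right_diff_distrib Delta_diff Delta_mult_units)

lemma cube_minus_in_Delta:
  fixes s d :: "'a::ring_1"
  assumes tripotent: "(s - d) ^ 3 = s - d" and "d \<in> Delta"
    and left: "\<And>x. x \<in> Delta \<Longrightarrow> s * x \<in> Delta"
    and right: "\<And>x. x \<in> Delta \<Longrightarrow> x * s \<in> Delta"
  shows "s ^ 3 - s \<in> Delta"
proof -
  from tripotent have "s ^ 3 - s =
      s * (s * d) + (s * d) * s + (d * s) * s
      - s * (d * d) - (d * s) * d - (d * d) * s + (d * d) * d - d"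
    by (simp add: power3_eq_cube algebra_simps)
  also have "\<dots> \<in> Delta"
    using \<open>d \<in> Delta\<close> by (intro Delta_add Delta_diff left right Delta_mult)
  finally show ?thesis .
qed

lemma left_ideal_unit_eq_UNIV:
  assumes "left_ideal I" "u \<in> I" "u \<in> units_of_ring"
  shows "I = (UNIV :: 'a::ring_1 set)"
proof -
  obtain v where "v * u = 1"
    using assms(3) unfolding units_of_ring_def by blast
  have "y \<in> I" for y
  proof -
    have "(y * v) * u \<in> I" using assms(1,2) unfolding left_ideal_def by blast
    then show ?thesis using \<open>v * u = 1\<close> by (simp add: mult.assoc)
  qed
  then show ?thesis by blast
qed

lemma left_ideal_add_principal:
  fixes c :: "'a::ring_1"
  assumes "left_ideal M"
  shows "left_ideal {m + a * c | m a. m \<in> M}" (is "left_ideal ?I")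
proof -
  have M: "0 \<in> M" "\<And>x y. x \<in> M \<Longrightarrow> y \<in> M \<Longrightarrow> x + y \<in> M"
    "\<And>x. x \<in> M \<Longrightarrow> - x \<in> M" "\<And>r x. x \<in> M \<Longrightarrow> r * x \<in> M"
    using assms unfolding left_ideal_def by blast+
  show ?thesis
    unfolding left_ideal_def
  proof (intro conjI ballI allI impI)
    have "0 = 0 + 0 * c" by simp
    then show "0 \<in> ?I" using M(1) by blast
  next
    fix x y assume "x \<in> ?I" "y \<in> ?I"
    then obtain m a m' a' where "x = m + a * c" "y = m' + a' * c" "m \<in> M" "m' \<in> M" by blast
    then have "x + y = (m + m') + (a + a') * c" "m + m' \<in> M" by (simp_all add: algebra_simps M(2))
    then show "x + y \<in> ?I" by blast
  next
    fix x assume "x \<in> ?I"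
    then obtain m a where "x = m + a * c" "m \<in> M" by blast
    then have "- x = - m + (- a) * c" "- m \<in> M" by (simp_all add: M(3))
    then show "- x \<in> ?I" by blast
  next
    fix r x assume "x \<in> ?I"
    then obtain m a where "x = m + a * c" "m \<in> M" by blast
    then have "r * x = r * m + (r * a) * c" "r * m \<in> M" by (simp_all add: algebra_simps M(4))
    then show "r * x \<in> ?I" by blast
  qed
qed

lemma in_jacobsonI:
  assumes "\<And>r. 1 - r * c \<in> units_of_ring"
  shows "(c::'a::ring_1) \<in> jacobson"
  unfolding jacobson_def
proof (rule InterI, clarify)
  fix M :: "'a set"
  assume M: "maximal_left_ideal M"
  show "c \<in> M"
  proof (rule ccontr)
    assume "c \<notin> M"
    define I where "I = {m + a * c | m a. m \<in> M}"
    have "left_ideal M" using M unfolding maximal_left_ideal_def by blast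
    then have "left_ideal I" unfolding I_def by (rule left_ideal_add_principal)
    moreover have "M \<subseteq> I"
      unfolding I_def by (force intro: exI[of _ 0])
    moreover have "c \<in> I"
      using \<open>left_ideal M\<close> unfolding I_def left_ideal_def by (force intro: exI[of _ 1])
    ultimately have "I = UNIV" using M \<open>c \<notin> M\<close> unfolding maximal_left_ideal_def by blast
    then obtain m a where "1 = m + a * c" "m \<in> M" unfolding I_def by blast
    then have "1 - a * c \<in> M" by (metis add_diff_cancel_right')
    then have "M = UNIV" using left_ideal_unit_eq_UNIV \<open>left_ideal M\<close> assms by blast
    then show False using M unfolding maximal_left_ideal_def by blast
  qed
qed

lemma six_mult_tripotent_in_Delta:
  assumes DT: "DT_ring TYPE('a::ring_1)" and "(e::'a) ^ 3 = e"
  shows "6 * e \<in> Delta"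
proof -
  define u v :: 'a where "u = 1 - e\<^sup>2 + e" and "v = 1 - (- e)\<^sup>2 + - e"
  have "(- e) ^ 3 = - e" using \<open>e ^ 3 = e\<close> by simp
  then have units: "u \<in> units_of_ring" "v \<in> units_of_ring"
    unfolding u_def v_def using \<open>e ^ 3 = e\<close>
    by (blast intro: involution_in_units_of_ring tripotent_involution)+
  have "e + e = u - v" unfolding u_def v_def by simp
  then have "(e + e) * x \<in> Delta" "x * (e + e) \<in> Delta" if "x \<in> Delta" for x
    using units that by (simp_all add: units_diff_mult_Delta Delta_mult_units_diff)
  moreover obtain t d where "e + e = t + d" "t ^ 3 = t" "d \<in> Delta"
    using DT unfolding DT_ring_def tripotents_def by blast
  ultimately have "(e + e) ^ 3 - (e + e) \<in> Delta"
    by (intro cube_minus_in_Delta[of _ d]) simp_all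
  moreover have "(e + e) ^ 3 = 6 * e + (e + e)"
    using \<open>e ^ 3 = e\<close> unfolding power3_eq_cube
    by (simp only: distrib_left distrib_right numeral_Bit0 numeral_Bit1 numeral_One mult_1_left add.assoc)
  ultimately show ?thesis by simp
qed

lemma six_mult_in_Delta:
  assumes DT: "DT_ring TYPE('a::ring_1)"
  shows "6 * (r::'a) \<in> Delta"
proof -
  obtain e d where "r = e + d" "e ^ 3 = e" "d \<in> Delta"
    using DT unfolding DT_ring_def tripotents_def by blast
  then have "6 * e + of_nat 6 * d \<in> Delta"
    using DT by (intro Delta_add six_mult_tripotent_in_Delta Delta_of_nat_mult)
  then show ?thesis using \<open>r = e + d\<close> by (simp add: distrib_left)
qed

theorem corollary2p8:
  assumes "DT_ring TYPE('a::ring_1)"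
  shows "(6::'a) \<in> jacobson"
proof (rule in_jacobsonI)
  fix r :: 'a
  have "6 * - r + 1 \<in> units_of_ring"
    using six_mult_in_Delta[OF assms] by (intro Delta_add_units units_of_ring_one)
  moreover have "r * 6 = 6 * r"
    by (metis mult_of_nat_commute of_nat_numeral)
  ultimately show "1 - r * 6 \<in> units_of_ring" by simp
qed

end
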